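(* Let $\mathbf{f} = (f_n)_{n\ge 1}$ be the ordinary paperfolding word over $\{0,1\}$, let $\rho(n)$ be its abelian complexity function, and for $i\ge1$ let $A(i)=\min\{n\in\mathbb{N} : \rho(n)=i+1\}$. Then for all $i\ge 1$, \[ A(i)=\begin{cases}\dfrac{2^i+1}{3} & \text{if } i \text{ is odd},\\[2mm] \dfrac{2^i+2}{3} & \text{if } i \text{ is even}.\end{cases} \]
   Context: The ordinary paperfolding word $\mathbf{f}=(f_n)_{n\ge1}$ over $\{0,1\}$ is defined as follows: for $n\ge 1$ write $n=n'2^k$ with $n'$ odd; then $f_n=0$ if $n'\equiv 1 \pmod 4$ and $f_n=1$ if $n'\equiv 3\pmod 4$. Thus $\mathbf{f}=0010011000110110\cdots$. A factor of $\mathbf{f}$ is a finite contiguous block $f_i f_{i+1}\cdots f_{i+n-1}$. Two words $u,v$ over $\{0,1\}$ are abelian equivalent if one is a rearrangement of the other. For $n\ge1$, the abelian complexity $\rho(n)$ is the number of abelian equivalence classes among the factors of $\mathbf{f}$ of length $n$. Here $\mathbb{N}=\{1,2,3,\dots\}$. *)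

theory Defs
  imports Main "HOL-Computational_Algebra.Primes"
begin

definition odd_part :: "nat \<Rightarrow> nat" where
  "odd_part n = n div 2 ^ multiplicity (2::nat) n"

(* ordinary paperfolding word, indexed from 1 *)
definition pf :: "nat \<Rightarrow> nat" where
  "pf n = (if odd_part n mod 4 = 1 then 0 else 1)"

definition pf_factor :: "nat \<Rightarrow> nat \<Rightarrow> nat list" where
  "pf_factor i n = map pf [i..<i+n]"

definition abel_eq :: "nat list \<Rightarrow> nat list \<Rightarrow> bool" where
  "abel_eq u v \<longleftrightarrow> mset u = mset v"

definition rho :: "nat \<Rightarrow> nat" where
  "rho n = card ((\<lambda>w. mset w) ` {pf_factor i n | i. i \<ge> 1})"

definition A :: "nat \<Rightarrow> nat" where
  "A i = (LEAST n. n \<ge> 1 \<and> rho n = i + 1)"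

end

theory Submission
  imports Defs
begin

text \<open>
  Let \<open>d(N)\<close> be the number of \<open>0\<close>s minus the number of \<open>1\<close>s among \<open>f\<^sub>1 \<dots> f\<^sub>N\<close>.
  A binary factor is determined up to abelian equivalence by its number of \<open>1\<close>s, and the
  factor of length \<open>n\<close> after position \<open>a\<close> has \<open>(n - (d(a+n) - d(a)))/2\<close> of them; so \<open>\<rho>(n)\<close>
  counts the values of \<open>d(a+n) - d(a)\<close>. Unfolding the paper once gives
  \<open>d(N) = [N mod 4 \<in> {1,2}] + d(N div 2)\<close>; halving a window thus changes its discrepancy by at
  most one, which yields \<open>2^|d(a+n) - d(a)| \<le> 3n\<close> and hence \<open>\<rho>(n) \<le> i\<close> whenever
  \<open>3n < 2^i\<close>. Conversely, sliding a window changes its number of \<open>1\<close>s by at most one, so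
  every value between two attained ones is attained, and at \<open>n = A(i)\<close> the windows ending at
  the numbers \<open>1010\<dots>\<^sub>2\<close> and \<open>3\<cdot>2^i\<close> reach discrepancies \<open>i\<close> and \<open>-i\<close>.
\<close>

lemma odd_part_odd: "odd n \<Longrightarrow> odd_part n = n"
  unfolding odd_part_def by (simp add: not_dvd_imp_multiplicity_0)

lemma odd_part_double: "n \<noteq> 0 \<Longrightarrow> odd_part (2 * n) = odd_part n"
  unfolding odd_part_def by (simp add: multiplicity_times_same)

lemma pf_double: "n \<noteq> 0 \<Longrightarrow> pf (2 * n) = pf n"
  unfolding pf_def by (simp add: odd_part_double)

lemma pf_odd:
  assumes "odd n"
  shows "pf n = of_bool (n mod 4 = 3)"
proof -
  have "odd_part n mod 4 = 1 \<longleftrightarrow> n mod 4 \<noteq> 3"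
    using assms odd_part_odd[OF assms] by presburger
  then show ?thesis
    unfolding pf_def by simp
qed

lemma pf_le_one: "pf n \<le> 1"
  unfolding pf_def by simp

definition pf_count :: "nat \<Rightarrow> nat" where
  "pf_count N = (\<Sum>k=1..N. pf k)"

lemma pf_count_0 [simp]: "pf_count 0 = 0"
  by (simp add: pf_count_def)

lemma pf_count_Suc: "pf_count (Suc N) = pf_count N + pf (Suc N)"
  by (simp add: pf_count_def)

lemma pf_count_rec: "pf_count N = (N + 1) div 4 + pf_count (N div 2)"
proof (induction N)
  case 0
  then show ?case by simp
next
  case (Suc N)
  show ?case
  proof (cases "even N")
    case True
    have "(Suc N + 1) div 4 = (N + 1) div 4 + of_bool (Suc N mod 4 = 3)"
      using True by (cases "Suc N mod 4 = 3") (simp_all, presburger+)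
    moreover have "Suc N div 2 = N div 2"
      using True by presburger
    ultimately show ?thesis
      using Suc pf_count_Suc[of N] pf_odd[of "Suc N"] True by simp
  next
    case False
    then obtain q where q: "Suc N = 2 * q" "q \<noteq> 0"
      by (metis dvd_def even_Suc mult_0_right nat.distinct(1))
    then have "N div 2 = q - 1"
      by presburger
    then have "pf_count q = pf_count (N div 2) + pf q"
      using pf_count_Suc[of "q - 1"] q(2) by simp
    moreover have "(Suc N + 1) div 4 = (N + 1) div 4" "Suc N div 2 = q"
      using False q(1) by presburger+
    ultimately show ?thesis
      using Suc q pf_count_Suc[of N] pf_double[of q] by simp
  qed
qed

definition pf_disc :: "nat \<Rightarrow> int" where
  "pf_disc N = int N - 2 * int (pf_count N)"

lemma pf_disc_rec: "pf_disc N = of_bool (N mod 4 \<in> {1, 2}) + pf_disc (N div 2)"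
proof -
  define q r where "q = N div 4" and "r = N mod 4"
  then have N: "N = 4 * q + r" "r < 4"
    by simp_all
  then have "(N + 1) div 4 = q + (r + 1) div 4" "N div 2 = 2 * q + r div 2" "N mod 4 = r"
    by simp_all
  moreover have "r = 0 \<or> r = 1 \<or> r = 2 \<or> r = 3"
    using N(2) by linarith
  ultimately have "int N - 2 * int ((N + 1) div 4) = of_bool (N mod 4 \<in> {1, 2}) + int (N div 2)"
    using N(1) by auto
  then show ?thesis
    unfolding pf_disc_def by (subst pf_count_rec) simp
qed

lemma pf_disc_Suc: "pf_disc (Suc N) = pf_disc N + 1 - 2 * int (pf (Suc N))"
  unfolding pf_disc_def by (simp add: pf_count_Suc)

lemma pf_disc_0 [simp]: "pf_disc 0 = 0"
  by (simp add: pf_disc_def)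

lemma pf_disc_double: "pf_disc (2 * N) = of_bool (odd N) + pf_disc N"
  using pf_disc_rec[of "2 * N"] by (cases "odd N") (simp_all, presburger+)

lemma pf_disc_double_Suc: "pf_disc (Suc (2 * N)) = of_bool (even N) + pf_disc N"
  using pf_disc_rec[of "Suc (2 * N)"] by (cases "odd N") (simp_all, presburger+)

lemma even_pf_disc_diff: "even (pf_disc N - int N)"
  unfolding pf_disc_def by simp

lemma two_pow_mod_three: "(2::nat) ^ e mod 3 = (if even e then 1 else 2)"
  by (induction e) (auto simp: mod_mult_right_eq[of 2 "2 ^ _" 3, symmetric])

lemma two_pow_odd_le_three_mul:
  fixes n e :: nat
  assumes "odd n" "odd e" "2 ^ e \<le> 3 * n + 3"
  shows "2 ^ e \<le> 3 * n"
proof -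
  define q :: nat where "q = 2 ^ e"
  have "q mod 3 = 2" "even q"
    using assms(2) two_pow_mod_three[of e] unfolding q_def by (auto simp: odd_pos)
  then have "q \<le> 3 * n"
    using assms(1,3) unfolding q_def[symmetric] by presburger
  then show ?thesis
    unfolding q_def .
qed

lemma pf_disc_window_bound:
  assumes "1 \<le> n"
  shows "2 ^ nat \<bar>pf_disc (a + n) - pf_disc a\<bar> \<le> 3 * n"
  using assms
proof (induction n arbitrary: a rule: less_induct)
  case (less n)
  define d where "d = pf_disc (a + n) - pf_disc a"
  show ?case
  proof (cases "n = 1")
    case True
    have "pf (Suc a) = 0 \<or> pf (Suc a) = 1"
      using pf_le_one[of "Suc a"] by linarith
    then have "\<bar>d\<bar> = 1"
      using True pf_disc_Suc[of a] unfolding d_def by auto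
    then show ?thesis
      using True unfolding d_def by simp
  next
    case False
    define m where "m = a mod 2"
    have "a + n = (n + m) + 2 * (a div 2)"
      unfolding m_def by simp
    then have m: "m \<le> 1" "(a + n) div 2 = a div 2 + (n + m) div 2"
      unfolding m_def by (simp, metis div_mult_self2 zero_neq_numeral)
    define n' where "n' = (n + m) div 2"
    have n2: "2 \<le> n"
      using False less.prems by simp
    have n': "1 \<le> n'" "n' < n" "2 * n' \<le> n + 1" "even n \<Longrightarrow> 2 * n' = n"
      using n2 m(1) unfolding n'_def by presburger+
    define d' where "d' = pf_disc (a div 2 + n') - pf_disc (a div 2)"
    have "d - d' = of_bool ((a + n) mod 4 \<in> {1, 2}) - of_bool (a mod 4 \<in> {1, 2})"
      unfolding d_def d'_def n'_def using pf_disc_rec[of "a + n"] pf_disc_rec[of a] m(2) by simp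
    then have "nat \<bar>d\<bar> \<le> Suc (nat \<bar>d'\<bar>)"
      by (simp only: of_bool_def split: if_splits)
    then have "(2::nat) ^ nat \<bar>d\<bar> \<le> 2 ^ Suc (nat \<bar>d'\<bar>)"
      by (rule power_increasing) simp
    also have "\<dots> = 2 * 2 ^ nat \<bar>d'\<bar>"
      by simp
    also have "\<dots> \<le> 6 * n'"
      using less.IH[OF n'(2,1)] unfolding d'_def by simp
    finally have pow_le: "(2::nat) ^ nat \<bar>d\<bar> \<le> 6 * n'" .
    have "even (d - int n)"
      using dvd_diff[OF even_pf_disc_diff[of "a + n"] even_pf_disc_diff[of a]]
      unfolding d_def by (simp add: algebra_simps)
    then have parity: "even (nat \<bar>d\<bar>) \<longleftrightarrow> even n"
      by (cases "d \<ge> 0") (auto simp: even_nat_iff)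
    show ?thesis
    proof (cases "even n")
      case True
      then show ?thesis
        using pow_le n'(4) unfolding d_def by simp
    next
      case False
      moreover have "(2::nat) ^ nat \<bar>d\<bar> \<le> 3 * n + 3"
        using pow_le n'(3) by linarith
      ultimately show ?thesis
        using two_pow_odd_le_three_mul parity unfolding d_def by blast
    qed
  qed
qed

definition window_ones :: "nat \<Rightarrow> nat \<Rightarrow> nat" where
  "window_ones n a = (\<Sum>k=Suc a..a + n. pf k)"

lemma sum_list_pf_factor: "sum_list (pf_factor (Suc a) n) = window_ones n a"
proof -
  have "{Suc a..<Suc a + n} = {Suc a..a + n}"
    by auto
  then show ?thesis
    unfolding pf_factor_def window_ones_def
    by (simp only: sum_set_upt_conv_sum_list_nat[symmetric] set_upt)
qed

lemma pf_count_add: "pf_count (a + n) = pf_count a + window_ones n a"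
  unfolding pf_count_def window_ones_def using sum.ub_add_nat[of 1 a pf n] by simp

lemma window_ones_le: "window_ones n a \<le> n"
proof -
  have "window_ones n a \<le> of_nat (card {Suc a..a + n}) * 1"
    unfolding window_ones_def by (rule sum_bounded_above) (rule pf_le_one)
  then show ?thesis
    by simp
qed

lemma window_ones_Suc: "window_ones n (Suc a) \<le> window_ones n a + 1"
  using pf_count_add[of "Suc a" n] pf_count_add[of a n] pf_count_Suc[of a] pf_count_Suc[of "a + n"]
    pf_le_one[of "Suc (a + n)"] by simp

lemma two_window_ones: "2 * int (window_ones n a) = int n - (pf_disc (a + n) - pf_disc a)"
  unfolding pf_disc_def using pf_count_add[of a n] by simp

lemma binary_word_sum_list_le_length: "set w \<subseteq> {0, 1} \<Longrightarrow> sum_list w \<le> length (w :: nat list)"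
  by (induction w) auto

lemma binary_word_mset:
  assumes "set w \<subseteq> {0, 1}"
  shows "mset w = replicate_mset (length w - sum_list w) 0 + replicate_mset (sum_list w) (1::nat)"
  using assms by (induction w) (auto simp: Suc_diff_le binary_word_sum_list_le_length)

lemma rho_eq_card_window_ones: "rho n = card (range (window_ones n))"
proof -
  define factors where "factors = range (\<lambda>a. pf_factor (Suc a) n)"
  have factors_eq: "{pf_factor i n | i. i \<ge> 1} = factors"
    unfolding factors_def by (auto simp: image_iff) (metis Suc_pred' less_eq_Suc_le)
  have binary: "set w \<subseteq> {0, 1}" "length w = n" if "w \<in> factors" for w
    using that unfolding factors_def pf_factor_def pf_def by auto
  have "inj_on sum_mset (mset ` factors)"
  proof (rule inj_onI)
    fix M M' assume "M \<in> mset ` factors" "M' \<in> mset ` factors" "sum_mset M = sum_mset M'"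
    then obtain u v where "u \<in> factors" "v \<in> factors" "M = mset u" "M' = mset v"
      "sum_list u = sum_list v"
      by (auto simp: sum_mset_sum_list)
    then show "M = M'"
      using binary binary_word_mset by metis
  qed
  moreover have "sum_mset ` mset ` factors = range (window_ones n)"
    unfolding factors_def by (auto simp: image_image sum_mset_sum_list sum_list_pf_factor)
  ultimately show ?thesis
    unfolding rho_def factors_eq by (metis card_image)
qed

lemma rho_le_of_window_disc_bound:
  assumes "\<And>a. \<bar>pf_disc (a + n) - pf_disc a\<bar> \<le> int K"
  shows "rho n \<le> K + 1"
proof -
  define I where "I = {(int n - int K + 1) div 2 .. (int n + int K) div 2}"
  have "int (window_ones n a) \<in> I" for a
  proof -
    have "\<bar>int n - 2 * int (window_ones n a)\<bar> \<le> int K"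
      using two_window_ones[of n a] assms[of a] by simp
    then show ?thesis
      unfolding I_def by auto
  qed
  then have "card (int ` range (window_ones n)) \<le> card I"
    by (intro card_mono) (auto simp: I_def)
  also have "card I \<le> K + 1"
    unfolding I_def by simp
  finally show ?thesis
    by (simp add: rho_eq_card_window_ones card_image)
qed

lemma rho_le_of_three_mul_less:
  assumes "1 \<le> n" "3 * n < 2 ^ k"
  shows "rho n \<le> k"
proof -
  have "\<bar>pf_disc (a + n) - pf_disc a\<bar> \<le> int (k - 1)" for a
  proof -
    have "(2::nat) ^ nat \<bar>pf_disc (a + n) - pf_disc a\<bar> < 2 ^ k"
      using pf_disc_window_bound[OF assms(1), of a] assms(2) by linarith
    then have "nat \<bar>pf_disc (a + n) - pf_disc a\<bar> < k"
      by (simp add: power_less_imp_less_exp)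
    then show ?thesis
      by linarith
  qed
  then have "rho n \<le> k - 1 + 1"
    by (rule rho_le_of_window_disc_bound)
  moreover have "k \<ge> 1"
    using assms by (cases k) auto
  ultimately show ?thesis
    by simp
qed

lemma interval_subset_range_of_step_le_one:
  fixes f :: "nat \<Rightarrow> nat"
  assumes step_le: "\<And>k. f (Suc k) \<le> f k + 1" and "x \<le> y"
  shows "{f x..f y} \<subseteq> range f"
  using \<open>x \<le> y\<close>
proof (induction y rule: dec_induct)
  case base
  then show ?case
    by auto
next
  case (step y)
  have "{f x..f (Suc y)} \<subseteq> {f x..f y} \<union> {f (Suc y)}"
    using step_le[of y] by auto
  then show ?case
    using step.IH by auto
qed

lemma rho_ge_of_window_gap:
  assumes "a \<le> b" "window_ones n b = window_ones n a + k"
  shows "k + 1 \<le> rho n"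
proof -
  have "{window_ones n a..window_ones n b} \<subseteq> range (window_ones n)"
    using interval_subset_range_of_step_le_one[of "window_ones n", OF window_ones_Suc assms(1)] .
  moreover have "finite (range (window_ones n))"
    by (rule finite_subset[OF _ finite_atMost[of n]]) (simp add: image_subset_iff window_ones_le)
  ultimately have "card {window_ones n a..window_ones n b} \<le> rho n"
    unfolding rho_eq_card_window_ones by (rule card_mono[rotated])
  then show ?thesis
    using assms(2) by simp
qed

text \<open>The numbers \<open>1010\<dots>\<^sub>2\<close> with \<open>k\<close> binary digits (OEIS A000975).\<close>

fun lichtenberg :: "nat \<Rightarrow> nat" where
  "lichtenberg 0 = 0"
| "lichtenberg (Suc k) = 2 * lichtenberg k + of_bool (even k)"

lemma odd_lichtenberg_iff: "odd (lichtenberg k) \<longleftrightarrow> odd k"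
  by (induction k) auto

lemma pf_disc_lichtenberg: "pf_disc (lichtenberg k) = int k"
proof (induction k)
  case 0
  then show ?case
    by simp
next
  case (Suc k)
  then show ?case
    using pf_disc_double[of "lichtenberg k"] pf_disc_double_Suc[of "lichtenberg k"]
      odd_lichtenberg_iff[of k] by (cases "even k") simp_all
qed

lemma three_mul_lichtenberg: "3 * lichtenberg k + (if odd k then 1 else 2) = 2 ^ Suc k"
  by (induction k) auto

lemma pf_disc_two_pow_minus_one: "1 \<le> i \<Longrightarrow> pf_disc (2 ^ i - 1) = 1"
proof (induction i rule: dec_induct)
  case base
  then show ?case
    using pf_disc_double_Suc[of 0] by simp
next
  case (step i)
  have "(2::nat) ^ Suc i - 1 = Suc (2 * (2 ^ i - 1))"
    by (cases "(2::nat) ^ i") simp_all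
  moreover have "odd ((2::nat) ^ i - 1)"
    using step.hyps by (simp add: Suc_le_eq)
  ultimately show ?case
    using pf_disc_double_Suc[of "2 ^ i - 1"] step.IH by simp
qed

lemma pf_disc_three_mul_two_pow: "1 \<le> i \<Longrightarrow> pf_disc (3 * 2 ^ i) = 2"
proof (induction i rule: dec_induct)
  case base
  then show ?case
    using pf_disc_double[of 3] pf_disc_double_Suc[of 1] pf_disc_double_Suc[of 0] by simp
next
  case (step i)
  then show ?case
    using pf_disc_double[of "3 * 2 ^ i"] by (simp add: mult.left_commute)
qed

lemma rho_ge_of_three_mul_eq:
  assumes "1 \<le> i" "3 * v = 2 ^ i + (if odd i then 1 else 2)"
  shows "i + 1 \<le> rho v"
proof -
  define p :: nat where "p = 2 ^ i"
  define a b where "a = p - 1" and "b = lichtenberg (i + 2)"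
  have "2 ^ 1 \<le> p"
    unfolding p_def using assms(1) by (rule power_increasing) simp
  moreover have "3 * lichtenberg (i + 1) + (if odd i then 2 else 1) = 4 * p"
    "3 * lichtenberg (i + 2) + (if odd i then 1 else 2) = 8 * p"
    using three_mul_lichtenberg[of "i + 1"] three_mul_lichtenberg[of "i + 2"]
    unfolding p_def by (cases "odd i"; simp del: lichtenberg.simps)+
  ultimately have ab: "a + v = lichtenberg (i + 1)" "b + v = 3 * p" "a \<le> b"
    using assms(2) unfolding a_def b_def p_def[symmetric] by (cases "odd i"; simp)+
  have "2 * int (window_ones v a) = int v - int i"
    using two_window_ones[of v a] pf_disc_lichtenberg[of "i + 1"] pf_disc_two_pow_minus_one[OF assms(1)]
    unfolding ab(1) by (simp add: a_def p_def)
  moreover have "2 * int (window_ones v b) = int v + int i"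
    using two_window_ones[of v b] pf_disc_lichtenberg[of "i + 2"] pf_disc_three_mul_two_pow[OF assms(1)]
    unfolding ab(2) by (simp add: b_def p_def)
  ultimately have "window_ones v b = window_ones v a + i"
    by linarith
  then show ?thesis
    by (rule rho_ge_of_window_gap[OF ab(3)])
qed

theorem proposition3:
  fixes i :: nat
  assumes "i \<ge> 1"
  shows "A i = (if odd i then (2 ^ i + 1) div 3 else (2 ^ i + 2) div 3)"
proof -
  define v :: nat where "v = (if odd i then (2 ^ i + 1) div 3 else (2 ^ i + 2) div 3)"
  have v: "3 * v = 2 ^ i + (if odd i then 1 else 2)"
    using two_pow_mod_three[of i] unfolding v_def by (cases "odd i") (simp_all, presburger+)
  have "2 ^ 1 \<le> (2::nat) ^ i"
    using assms by (rule power_increasing) simp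
  moreover have "2 ^ 2 \<le> (2::nat) ^ i" if "even i"
    using that assms by (intro power_increasing) presburger+
  ultimately have "1 \<le> v" "3 * v < 2 ^ Suc i"
    using v by (cases "odd i"; simp)+
  then have "rho v = i + 1"
    using rho_le_of_three_mul_less rho_ge_of_three_mul_eq[OF assms v] by fastforce
  moreover have "rho m \<le> i" if "1 \<le> m" "m < v" for m
  proof (rule rho_le_of_three_mul_less)
    show "3 * m < 2 ^ i"
      using that v by (cases "odd i") simp_all
  qed (use that in simp)
  ultimately have "A i = v"
    unfolding A_def using \<open>1 \<le> v\<close> by (intro Least_equality) (auto, fastforce)
  then show ?thesis
    unfolding v_def .
qed

end
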